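(* Let $p$ be a prime, $k\ge2$, and let $\partial_{k+1}$, $u_1$, $y_1$ be as in the context. Then, up to a unit, there is an element $x$ of lower filtration than $[p,g_1^2+kg_1+1]$ such that $$\partial_{k+1}\big([p,g_1^2+kg_1+1]+u_1^{-1}y_1[1,g_1^2+(k+1)g_1+1]\big)=u\,p\,v^{kg_1}[p,g_1^2+1]+\partial_{k+1}(x)$$ for some unit $u\in ku_*$.
   Context: Fix a prime $p$; $ku_*=\mathbb{Z}_{(p)}[v]$, $v$ of degree 2; $g_1=p-1$. For $m\ge1$, $0\le t\le p^m-1$, let $a_{t,m}=\binom{p^m}{t+1}v^t$. The reduced $ku_*(\mathbb{Z}_{p^2})$ is the $ku_*$-module generated by $e_j$ ($j\ge1$) with relations $\sum_{t=0}^{p^2-1}a_{t,2}e_{j-t}=0$ for all $j\ge1$ ($e_h=0$ for $h\le0$). $F$ is the free $ku_*$-module on $\alpha_i$, $i\ge1$ ($\alpha_h=0$ for $h\le0$); $[i,j]=\alpha_i\otimes e_j\in F\otimes_{ku_*}ku_*(\mathbb{Z}_{p^2})$, zero if $i\le0$ or $j\le0$. The $ku_*$-linear map $\partial_{k+1}$ on $F\otimes_{ku_*}ku_*(\mathbb{Z}_{p^2})$ is $\partial_{k+1}([i,j])=\sum_{t=0}^{p^{k+1}-1}a_{t,k+1}[i-t,j]$. Units: $u_1=\binom{p^2}{p}/p$ and $y_1=\binom{p^{k+1}}{p}/p^k$ (units of $\mathbb{Z}_{(p)}$), so $a_{g_1,2}=u_1pv^{g_1}$ and $a_{g_1,k+1}=y_1p^kv^{g_1}$.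 Filtration: $c[i,j]$ has filtration $i(p^{k+1}+1)+j(p^k+1)$; an element is of lower filtration than $[a,b]$ if it is a $ku_*$-linear combination of elements $[i,j]$ of strictly smaller filtration. *)

theory Defs
  imports "HOL-Computational_Algebra.Polynomial" "HOL-Computational_Algebra.Primes"
begin

text \<open>ku_* = Z_(p)[v] is modelled inside rat poly (variable = v) as the polynomials
all of whose coefficients lie in Z_(p).  Elements of F (x) ku_*(Z_{p^2}) are represented
by finitely supported coefficient functions on pairs (i,j), the pair standing for [i,j];
pairs with i = 0 or j = 0 stand for zero.  Equality in F (x) ku_*(Z_{p^2}) is equality
modulo the ku_*-submodule generated by the relations.\<close>

type_synonym elt = "nat \<times> nat \<Rightarrow> rat poly"

definition inZp :: "nat \<Rightarrow> rat \<Rightarrow> bool" where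
  "inZp p q = coprime (snd (quotient_of q)) (int p)"

definition unitZp :: "nat \<Rightarrow> rat \<Rightarrow> bool" where
  "unitZp p q = (q \<noteq> 0 \<and> inZp p q \<and> inZp p (inverse q))"

definition inKu :: "nat \<Rightarrow> rat poly \<Rightarrow> bool" where
  "inKu p c = (\<forall>n. inZp p (coeff c n))"

definition br :: "nat \<Rightarrow> nat \<Rightarrow> elt" where
  "br i j = (\<lambda>x. if i = 0 \<or> j = 0 then 0 else if x = (i, j) then 1 else 0)"

definition acoef :: "nat \<Rightarrow> nat \<Rightarrow> nat \<Rightarrow> rat poly" where
  "acoef p t m = monom (of_nat ((p ^ m) choose (t + 1))) t"

definition relem :: "nat \<Rightarrow> nat \<Rightarrow> nat \<Rightarrow> elt" where
  "relem p i j = (\<lambda>x. \<Sum>t<p ^ 2. acoef p t 2 * br i (j - t) x)"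

definition relations :: "nat \<Rightarrow> elt set" where
  "relations p = {f. \<exists>S c. finite S \<and> (\<forall>ij\<in>S. inKu p (c ij)) \<and>
      f = (\<lambda>x. \<Sum>ij\<in>S. c ij * relem p (fst ij) (snd ij) x)}"

definition eqM :: "nat \<Rightarrow> elt \<Rightarrow> elt \<Rightarrow> bool" where
  "eqM p f g = ((\<lambda>x. f x - g x) \<in> relations p)"

text \<open>the boundary map partial_{k+1}([i,j]) = sum_{t<p^{k+1}} a_{t,k+1} [i-t, j],
  written on coefficient functions\<close>
definition bd :: "nat \<Rightarrow> nat \<Rightarrow> elt \<Rightarrow> elt" where
  "bd p k f = (\<lambda>(i, j). if i = 0 \<or> j = 0 then 0
       else \<Sum>t<p ^ (k + 1). acoef p t (k + 1) * f (i + t, j))"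

definition filt :: "nat \<Rightarrow> nat \<Rightarrow> nat \<Rightarrow> nat \<Rightarrow> nat" where
  "filt p k i j = i * (p ^ (k + 1) + 1) + j * (p ^ k + 1)"

definition lower_filt :: "nat \<Rightarrow> nat \<Rightarrow> elt \<Rightarrow> nat \<Rightarrow> nat \<Rightarrow> bool" where
  "lower_filt p k f a b = (finite {x. f x \<noteq> 0} \<and> (\<forall>x. inKu p (f x)) \<and>
     (\<forall>i j. f (i, j) \<noteq> 0 \<longrightarrow> 1 \<le> i \<and> 1 \<le> j \<and> filt p k i j < filt p k a b))"

end

theory Submission
  imports Defs "HOL-Algebra.Exponent"
begin

text \<open>
  Put \<open>g = p - 1\<close>, \<open>N = g^2 + k g + 1\<close> and \<open>U = binom(p^2, p) / p\<close>, a unit of \<open>\<int>_(p)\<close>, and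
  call an element negligible if it is congruent modulo the relations to the boundary of an
  element of lower filtration than \<open>[p, N]\<close>.  As \<open>[i, j]\<close> has lower filtration when \<open>i < p\<close> or
  \<open>j < N\<close>, the leading term \<open>p^(k+1) v^e [i, j]\<close> of the boundary of \<open>v^e [i, j]\<close> is negligible as
  soon as its other terms are.  In the relation of \<open>ku_*(\<int>/p^2)\<close> the coefficient
  \<open>binom(p^2, t + 1)\<close> is divisible by \<open>p^2\<close>, except that it is \<open>p\<close> times a unit at \<open>t = g\<close>, a
  multiple of \<open>p\<close> at the other \<open>t + 1 \<in> p \<nat>\<close>, and \<open>1\<close> at \<open>t = p^2 - 1\<close>.  So \<open>p^(a-1)/U\<close> times the
  relation rewrites \<open>p^a v^e [i, j]\<close> through terms with a higher power of \<open>p\<close> or a smaller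
  second index, and descending in this way shows that \<open>p^a v^e [i, j]\<close> is negligible in the
  rows \<open>i = 1\<close> and \<open>i = p\<close> whenever \<open>a\<close> and \<open>e\<close> are large compared to \<open>j\<close>.  Applying the relation
  \<open>k\<close> times to the leading term \<open>p^(k+1) [p, N]\<close> of the boundary of \<open>[p, N]\<close> turns it into
  \<open>(-U)^k p v^(k g) [p, g^2 + 1]\<close>, and the correction term \<open>(y\<^sub>1/u\<^sub>1) [1, N + g]\<close> is chosen so that
  one more relation cancels the term \<open>binom(p^(k+1), p) v^g [1, N]\<close> of that boundary.
\<close>

section \<open>The local ring \<open>\<int>\<^sub>(\<^sub>p\<^sub>)\<close>\<close>

lemma inZp_iff:
  "inZp p q \<longleftrightarrow> (\<exists>a b. b > 0 \<and> coprime b (int p) \<and> q = of_int a / of_int b)"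
proof
  assume "inZp p q"
  obtain a b where ab: "quotient_of q = (a, b)" by (cases "quotient_of q")
  then have "b > 0" "q = of_int a / of_int b" using quotient_of_denom_pos quotient_of_div by blast+
  moreover have "coprime b (int p)" using \<open>inZp p q\<close> ab by (simp add: inZp_def)
  ultimately show "\<exists>a b. b > 0 \<and> coprime b (int p) \<and> q = of_int a / of_int b" by blast
next
  assume "\<exists>a b. b > 0 \<and> coprime b (int p) \<and> q = of_int a / of_int b"
  then obtain a b where b: "b > 0" "coprime b (int p)" "q = of_int a / of_int b" by blast
  obtain n d where nd: "quotient_of q = (n, d)" by (cases "quotient_of q")
  have d: "d > 0" "q = of_int n / of_int d" "coprime n d"
    using nd quotient_of_denom_pos quotient_of_div quotient_of_coprime by blast+
  have "of_int a / of_int b = (of_int n / of_int d :: rat)" using b d by simp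
  then have "of_int (a * d) = (of_int (n * b) :: rat)" using b(1) d(1)
    by (simp add: field_simps)
  then have "a * d = n * b" by linarith
  then have "d dvd n * b" by (metis dvd_triv_right)
  then have "d dvd b" using d(3) by (metis coprime_commute coprime_dvd_mult_right_iff)
  then have "coprime d (int p)" using b(2) by (meson coprime_imp_coprime dvd_trans)
  then show "inZp p q" using nd by (simp add: inZp_def)
qed

lemma inZp_of_int [simp]: "inZp p (of_int n)"
  by (simp add: inZp_def)

lemma inZp_of_nat [simp]: "inZp p (of_nat n)"
  by (simp add: inZp_def)

lemma inZp_0 [simp]: "inZp p 0" and inZp_1 [simp]: "inZp p 1"
  by (simp_all add: inZp_def)

lemma inZp_add:
  assumes "inZp p x" "inZp p y"
  shows "inZp p (x + y)"
proof -
  obtain a b c d where ab: "b > 0" "coprime b (int p)" "x = of_int a / of_int b"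
     and cd: "d > 0" "coprime d (int p)" "y = of_int c / of_int d"
    using assms inZp_iff by metis
  have "x + y = of_int (a * d + c * b) / of_int (b * d)" using ab cd by (simp add: field_simps)
  moreover have "b * d > 0" "coprime (b * d) (int p)" using ab cd by auto
  ultimately show ?thesis using inZp_iff by blast
qed

lemma inZp_mult:
  assumes "inZp p x" "inZp p y"
  shows "inZp p (x * y)"
proof -
  obtain a b c d where ab: "b > 0" "coprime b (int p)" "x = of_int a / of_int b"
     and cd: "d > 0" "coprime d (int p)" "y = of_int c / of_int d"
    using assms inZp_iff by metis
  have "x * y = of_int (a * c) / of_int (b * d)" using ab cd by (simp add: field_simps)
  moreover have "b * d > 0" "coprime (b * d) (int p)" using ab cd by auto
  ultimately show ?thesis using inZp_iff by blast
qed

lemma inZp_uminus: "inZp p x \<Longrightarrow> inZp p (- x)"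
  using inZp_mult[OF inZp_of_int[of p "-1"]] by simp

lemma inZp_power: "inZp p x \<Longrightarrow> inZp p (x ^ n)"
  by (induction n) (auto intro: inZp_mult)

lemma inZp_inverse_of_nat:
  assumes "prime p" "\<not> p dvd n"
  shows "inZp p (inverse (of_nat n))"
proof -
  have "coprime n p"
    using prime_imp_coprime[OF assms] by (simp add: coprime_commute)
  then have "coprime (int n) (int p)" by simp
  moreover have "n > 0" using assms(2) by (metis dvd_0_right gr0I)
  moreover have "inverse (of_nat n) = (of_int 1 / of_int (int n) :: rat)"
    by (simp add: divide_inverse)
  ultimately show ?thesis unfolding inZp_iff by (metis of_nat_0_less_iff)
qed

section \<open>Binomial coefficients at prime powers\<close>

lemma prime_power_dvd_choose:
  assumes "prime p" "0 < j" "\<not> p dvd j"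
  shows "p ^ m dvd (p ^ m choose j)"
proof -
  have "p ^ m dvd j * (p ^ m choose j)"
    using times_binomial_minus1_eq[OF assms(2)] by simp
  moreover have "coprime (p ^ m) j"
    using assms by (simp add: prime_imp_coprime coprime_power_left_iff)
  ultimately show ?thesis by (simp add: coprime_dvd_mult_right_iff)
qed

lemma prime_dvd_choose_prime_power:
  assumes "prime p" "0 < j" "j < p ^ n"
  shows "p dvd (p ^ n choose j)"
proof -
  define r where "r = multiplicity p j"
  have "j \<noteq> 0" "\<not> is_unit p" using assms by auto
  then obtain s where s: "j = p ^ r * s" "\<not> p dvd s"
    using multiplicity_decompose'[of j p] unfolding r_def by blast
  have "p ^ r < p ^ n" using s(1) assms(2,3) by (metis dvd_imp_le dvd_triv_left le_less_trans)
  then have "r < n" using prime_gt_1_nat[OF assms(1)] by (rule power_less_imp_less_exp[rotated])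
  have jx: "j * x = p ^ r * (s * x)" for x using s(1) by simp
  have "p ^ n dvd j * (p ^ n choose j)"
    using times_binomial_minus1_eq[OF assms(2)] by simp
  then have "p ^ r * p ^ (n - r) dvd p ^ r * (s * (p ^ n choose j))"
    unfolding jx power_add[symmetric] using \<open>r < n\<close> by simp
  then have "p ^ (n - r) dvd s * (p ^ n choose j)"
    using assms(1) by (simp add: prime_gt_0_nat)
  moreover have "p dvd p ^ (n - r)" using \<open>r < n\<close> by simp
  ultimately have "p dvd s * (p ^ n choose j)" by (blast intro: dvd_trans)
  then show ?thesis using s(2) assms(1) by (simp add: prime_dvd_mult_iff)
qed

lemma choose_prime_square_factor:
  assumes "prime p" "t < p ^ 2" "t \<noteq> p - 1"
  obtains n d where "p ^ 2 choose (t + 1) = d * p ^ n"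
    and "n = 2 \<or> (n = 1 \<and> 2 * (p - 1) < t) \<or> (n = 0 \<and> t = p ^ 2 - 1)"
proof (cases "t = p ^ 2 - 1")
  case True
  then have "t + 1 = p ^ 2" using assms(2) by simp
  then show ?thesis using that[of 1 0] True by simp
next
  case last: False
  show ?thesis
  proof (cases "p dvd (t + 1)")
    case True
    then obtain m where m: "t + 1 = p * m" ..
    have "m \<noteq> 0" using m by (intro notI) simp
    moreover have "m \<noteq> 1" using m assms(3) by auto
    ultimately have "p * 2 \<le> p * m" by simp
    then have "2 * p \<le> t + 1" using m by simp
    have "p dvd (p ^ 2 choose (t + 1))"
      using prime_dvd_choose_prime_power[OF assms(1), of "t + 1" 2] assms(2) last by simp
    then obtain d where "p ^ 2 choose (t + 1) = p * d" ..
    moreover have "2 * (p - 1) < t"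
      using \<open>2 * p \<le> t + 1\<close> prime_gt_0_nat[OF assms(1)] by linarith
    ultimately show ?thesis using that[of d 1] by (simp add: mult.commute)
  next
    case False
    then have "p ^ 2 dvd (p ^ 2 choose (t + 1))" using prime_power_dvd_choose[OF assms(1)] by simp
    then obtain d where "p ^ 2 choose (t + 1) = p ^ 2 * d" ..
    then show ?thesis using that[of d 2] by (simp add: mult.commute)
  qed
qed

definition U1 :: "nat \<Rightarrow> nat" where
  "U1 p = (p ^ 2 choose p) div p"

lemma choose_prime_square_prime:
  assumes "prime p"
  shows "p ^ 2 choose p = p * U1 p" and "\<not> p dvd U1 p"
proof -
  have "multiplicity p (p ^ 1 * p choose p ^ 1) = multiplicity p p"
    using const_p_fac[of p p 1] assms prime_gt_0_nat by blast
  then have mult: "multiplicity p (p ^ 2 choose p) = 1"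
    using assms by (simp add: power2_eq_square)
  then have "p dvd (p ^ 2 choose p)"
    using not_dvd_imp_multiplicity_0 by fastforce
  then show eq: "p ^ 2 choose p = p * U1 p" by (simp add: U1_def)
  have "p \<le> p ^ 2" by (simp add: power2_eq_square)
  then have "U1 p \<noteq> 0" using eq zero_less_binomial[of p "p ^ 2"] by auto
  then have "multiplicity p (U1 p) = 0"
    using mult assms unfolding eq by (simp add: prime_elem_multiplicity_mult_distrib)
  then show "\<not> p dvd U1 p"
    using multiplicity_eq_zero_iff[of "U1 p" p] \<open>U1 p \<noteq> 0\<close> prime_gt_1_nat[OF assms] by auto
qed

definition Y1 :: "nat \<Rightarrow> nat \<Rightarrow> nat" where
  "Y1 p k = (p ^ (k + 1) choose p) div p ^ k"

lemma choose_prime_power_prime: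
  assumes "prime p"
  shows "p ^ (k + 1) choose p = p ^ k * Y1 p k"
proof -
  have "p * (p ^ (k + 1) choose p) = p * (p ^ k * ((p ^ (k + 1) - 1) choose (p - 1)))"
    using times_binomial_minus1_eq[of p "p ^ (k + 1)"] assms prime_gt_0_nat by (simp add: ac_simps)
  then have "p ^ (k + 1) choose p = p ^ k * ((p ^ (k + 1) - 1) choose (p - 1))"
    using assms prime_gt_0_nat by simp
  then show ?thesis by (simp add: Y1_def)
qed

section \<open>Negligible elements\<close>

definition mbr :: "rat \<Rightarrow> nat \<Rightarrow> nat \<Rightarrow> nat \<Rightarrow> elt" where
  "mbr c e i j = (\<lambda>z. monom c e * br i j z)"

lemma mbr_0_right [simp]: "mbr c e i 0 = (\<lambda>z. 0)"
  by (simp add: mbr_def br_def)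

lemma inKu_0 [simp]: "inKu p 0"
  by (simp add: inKu_def)

lemma inKu_add: "inKu p a \<Longrightarrow> inKu p b \<Longrightarrow> inKu p (a + b)"
  by (simp add: inKu_def inZp_add)

lemma inKu_monom_mult: "inZp p c \<Longrightarrow> inKu p q \<Longrightarrow> inKu p (monom c d * q)"
  by (simp add: inKu_def coeff_monom_mult inZp_mult)

lemma inKu_monom: "inZp p c \<Longrightarrow> inKu p (monom c d)"
  by (simp add: inKu_def coeff_monom)

lemma inKu_br: "inKu p (br i j z)"
  by (simp add: br_def inKu_def coeff_1)

lemma relations_add:
  assumes "f \<in> relations p" "g \<in> relations p"
  shows "(\<lambda>z. f z + g z) \<in> relations p"
proof -
  obtain S1 c1 where 1: "finite S1" "\<forall>ij\<in>S1. inKu p (c1 ij)"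
      "f = (\<lambda>x. \<Sum>ij\<in>S1. c1 ij * relem p (fst ij) (snd ij) x)"
    using assms(1) unfolding relations_def by blast
  obtain S2 c2 where 2: "finite S2" "\<forall>ij\<in>S2. inKu p (c2 ij)"
      "g = (\<lambda>x. \<Sum>ij\<in>S2. c2 ij * relem p (fst ij) (snd ij) x)"
    using assms(2) unfolding relations_def by blast
  define c where "c ij = (if ij \<in> S1 then c1 ij else 0) + (if ij \<in> S2 then c2 ij else 0)" for ij
  have fin: "finite (S1 \<union> S2)" using 1 2 by simp
  have ku: "\<forall>ij\<in>S1 \<union> S2. inKu p (c ij)" using 1 2 by (simp add: c_def inKu_add)
  have eq: "f x + g x = (\<Sum>ij\<in>S1 \<union> S2. c ij * relem p (fst ij) (snd ij) x)" for x
  proof -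
    have "(\<Sum>ij\<in>S1 \<union> S2. c ij * relem p (fst ij) (snd ij) x)
       = (\<Sum>ij\<in>S1 \<union> S2. (if ij \<in> S1 then c1 ij * relem p (fst ij) (snd ij) x else 0))
       + (\<Sum>ij\<in>S1 \<union> S2. (if ij \<in> S2 then c2 ij * relem p (fst ij) (snd ij) x else 0))"
      unfolding sum.distrib[symmetric] by (rule sum.cong) (auto simp: c_def distrib_right)
    also have "\<dots> = f x + g x"
      unfolding sum.inter_restrict[OF fin, symmetric] using 1 2 by (simp add: Int_absorb1)
    finally show ?thesis by simp
  qed
  show ?thesis
    unfolding relations_def using fin ku eq by (intro CollectI exI[of _ "S1 \<union> S2"] exI[of _ c]) auto
qed

lemma relations_smult:
  assumes "f \<in> relations p" "inZp p c"
  shows "(\<lambda>z. monom c d * f z) \<in> relations p"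
proof -
  obtain S c1 where S: "finite S" "\<forall>ij\<in>S. inKu p (c1 ij)"
      "f = (\<lambda>x. \<Sum>ij\<in>S. c1 ij * relem p (fst ij) (snd ij) x)"
    using assms(1) unfolding relations_def by blast
  have "(\<lambda>z. monom c d * f z) = (\<lambda>x. \<Sum>ij\<in>S. (monom c d * c1 ij) * relem p (fst ij) (snd ij) x)"
    using S by (simp add: sum_distrib_left mult.assoc)
  moreover have "\<forall>ij\<in>S. inKu p (monom c d * c1 ij)"
    using S assms(2) by (simp add: inKu_monom_mult)
  ultimately show ?thesis
    unfolding relations_def using S(1) by (intro CollectI exI[of _ S] exI[of _ "\<lambda>ij. monom c d * c1 ij"]) auto
qed

lemma relations_relem:
  assumes "inZp p c"
  shows "(\<lambda>z. monom c d * relem p i j z) \<in> relations p"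
proof -
  have "(\<lambda>z. monom c d * relem p i j z) = (\<lambda>x. \<Sum>ij\<in>{(i, j)}. monom c d * relem p (fst ij) (snd ij) x)"
    by simp
  then show ?thesis unfolding relations_def
    using assms inKu_monom by (intro CollectI exI[of _ "{(i, j)}"] exI[of _ "\<lambda>ij. monom c d"]) auto
qed

lemma lower_filt_0: "lower_filt p k (\<lambda>z. 0) a b"
  by (simp add: lower_filt_def)

lemma lower_filt_add:
  assumes "lower_filt p k x a b" "lower_filt p k y a b"
  shows "lower_filt p k (\<lambda>z. x z + y z) a b"
proof -
  have "{z. x z + y z \<noteq> 0} \<subseteq> {z. x z \<noteq> 0} \<union> {z. y z \<noteq> 0}" by auto
  then have "finite {z. x z + y z \<noteq> 0}"
    using assms unfolding lower_filt_def by (meson finite_Un finite_subset)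
  moreover have "\<forall>z. inKu p (x z + y z)"
    using assms unfolding lower_filt_def by (simp add: inKu_add)
  moreover have "1 \<le> i \<and> 1 \<le> j \<and> filt p k i j < filt p k a b" if "x (i, j) + y (i, j) \<noteq> 0" for i j
  proof -
    have "x (i, j) \<noteq> 0 \<or> y (i, j) \<noteq> 0" using that by auto
    then show ?thesis using assms unfolding lower_filt_def by blast
  qed
  ultimately show ?thesis unfolding lower_filt_def by blast
qed

lemma lower_filt_smult:
  assumes "lower_filt p k x a b" "inZp p c"
  shows "lower_filt p k (\<lambda>z. monom c d * x z) a b"
proof -
  have "{z. monom c d * x z \<noteq> 0} \<subseteq> {z. x z \<noteq> 0}" by auto
  then have "finite {z. monom c d * x z \<noteq> 0}"
    using assms unfolding lower_filt_def by (meson finite_subset)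
  moreover have "\<forall>z. inKu p (monom c d * x z)"
    using assms unfolding lower_filt_def by (simp add: inKu_monom_mult)
  moreover have "1 \<le> i \<and> 1 \<le> j \<and> filt p k i j < filt p k a b" if "monom c d * x (i, j) \<noteq> 0" for i j
    using that assms unfolding lower_filt_def by auto
  ultimately show ?thesis unfolding lower_filt_def by blast
qed

lemma lower_filt_mbr:
  assumes "inZp p c" "1 \<le> i" "1 \<le> j" "filt p k i j < filt p k a b"
  shows "lower_filt p k (mbr c e i j) a b"
proof -
  have "{z. br i j z \<noteq> 0} \<subseteq> {(i, j)}" by (auto simp: br_def split: if_splits)
  then have "finite {z. br i j z \<noteq> 0}" using finite_subset by blast
  moreover have "1 \<le> i' \<and> 1 \<le> j' \<and> filt p k i' j' < filt p k a b" if "br i j (i', j') \<noteq> 0" for i' j'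
    using that assms by (auto simp: br_def split: if_splits)
  ultimately have "lower_filt p k (br i j) a b"
    unfolding lower_filt_def by (blast intro: inKu_br)
  then show ?thesis unfolding mbr_def using assms(1) by (rule lower_filt_smult)
qed

lemma bd_add: "bd p k (\<lambda>z. f z + g z) = (\<lambda>z. bd p k f z + bd p k g z)"
  by (auto simp: bd_def fun_eq_iff sum.distrib distrib_left)

lemma bd_smult: "bd p k (\<lambda>z. c * f z) = (\<lambda>z. c * bd p k f z)"
  by (auto simp: bd_def fun_eq_iff sum_distrib_left ac_simps)

lemma bd_0: "bd p k (\<lambda>z. 0) = (\<lambda>z. 0)"
  by (auto simp: bd_def fun_eq_iff)

lemma bd_br:
  assumes "1 \<le> a" "a \<le> p ^ (k + 1)"
  shows "bd p k (br a b) = (\<lambda>z. \<Sum>t<a. acoef p t (k + 1) * br (a - t) b z)"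
proof (rule ext, clarify)
  fix i j
  show "bd p k (br a b) (i, j) = (\<Sum>t<a. acoef p t (k + 1) * br (a - t) b (i, j))"
  proof (cases "i = 0 \<or> j = 0")
    case True
    then show ?thesis by (auto simp: bd_def br_def intro!: sum.neutral)
  next
    case False
    define h where "h t = (if t = a - i then (if j = b \<and> i \<le> a then acoef p t (k + 1) else 0) else 0)" for t
    have "a - i < p ^ (k + 1)" "a - i < a" using assms False by auto
    have "bd p k (br a b) (i, j) = (\<Sum>t<p ^ (k + 1). acoef p t (k + 1) * br a b (i + t, j))"
      using False by (simp add: bd_def)
    also have "\<dots> = (\<Sum>t<p ^ (k + 1). h t)"
      using False assms(1) by (intro sum.cong refl) (auto simp: br_def h_def)
    also have "\<dots> = h (a - i)"
      using \<open>a - i < p ^ (k + 1)\<close> by (simp add: h_def)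
    also have "\<dots> = (\<Sum>t<a. h t)"
      using \<open>a - i < a\<close> by (simp add: h_def)
    also have "\<dots> = (\<Sum>t<a. acoef p t (k + 1) * br (a - t) b (i, j))"
      using False by (intro sum.cong refl) (auto simp: br_def h_def)
    finally show ?thesis .
  qed
qed

lemma bd_mbr:
  assumes "1 \<le> a" "a \<le> p ^ (k + 1)"
  shows "bd p k (mbr c e a b) =
    (\<lambda>z. \<Sum>t<a. mbr (c * of_nat (p ^ (k + 1) choose (t + 1))) (e + t) (a - t) b z)"
  using bd_smult[of p k "monom c e" "br a b"] unfolding mbr_def bd_br[OF assms]
  by (simp add: fun_eq_iff acoef_def sum_distrib_left mult_monom mult.assoc[symmetric])

definition lower_boundaries :: "nat \<Rightarrow> nat \<Rightarrow> nat \<Rightarrow> nat \<Rightarrow> elt set" where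
  "lower_boundaries p k a b = {f. \<exists>x. lower_filt p k x a b \<and> eqM p f (bd p k x)}"

lemma relations_subset_lower_boundaries:
  "f \<in> relations p \<Longrightarrow> f \<in> lower_boundaries p k a b"
  unfolding lower_boundaries_def eqM_def
  by (intro CollectI exI[of _ "\<lambda>z. 0"] conjI lower_filt_0) (simp add: bd_0)

lemma bd_in_lower_boundaries:
  assumes "lower_filt p k x a b"
  shows "bd p k x \<in> lower_boundaries p k a b"
proof -
  have "(\<lambda>z. 0) \<in> relations p"
    unfolding relations_def by (auto intro!: exI[of _ "{}"])
  then show ?thesis
    using assms unfolding lower_boundaries_def eqM_def by auto
qed

lemma lower_boundaries_0: "(\<lambda>z. 0) \<in> lower_boundaries p k a b"
  using bd_in_lower_boundaries[OF lower_filt_0[of p k a b]] by (simp add: bd_0)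

lemma lower_boundaries_add:
  assumes "f \<in> lower_boundaries p k a b" "g \<in> lower_boundaries p k a b"
  shows "(\<lambda>z. f z + g z) \<in> lower_boundaries p k a b"
proof -
  obtain x where x: "lower_filt p k x a b" "(\<lambda>z. f z - bd p k x z) \<in> relations p"
    using assms(1) unfolding lower_boundaries_def eqM_def by blast
  obtain y where y: "lower_filt p k y a b" "(\<lambda>z. g z - bd p k y z) \<in> relations p"
    using assms(2) unfolding lower_boundaries_def eqM_def by blast
  have "(\<lambda>z. (f z + g z) - bd p k (\<lambda>z. x z + y z) z)
       = (\<lambda>z. (f z - bd p k x z) + (g z - bd p k y z))"
    by (simp add: bd_add fun_eq_iff)
  then show ?thesis
    using relations_add[OF x(2) y(2)] lower_filt_add[OF x(1) y(1)]
    unfolding lower_boundaries_def eqM_def by (intro CollectI exI[of _ "\<lambda>z. x z + y z"]) auto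
qed

lemma lower_boundaries_smult:
  assumes "f \<in> lower_boundaries p k a b" "inZp p c"
  shows "(\<lambda>z. monom c d * f z) \<in> lower_boundaries p k a b"
proof -
  obtain x where x: "lower_filt p k x a b" "(\<lambda>z. f z - bd p k x z) \<in> relations p"
    using assms(1) unfolding lower_boundaries_def eqM_def by blast
  have "(\<lambda>z. monom c d * f z - bd p k (\<lambda>z. monom c d * x z) z)
       = (\<lambda>z. monom c d * (f z - bd p k x z))"
    by (simp add: bd_smult fun_eq_iff right_diff_distrib)
  then show ?thesis
    using relations_smult[OF x(2) assms(2)] lower_filt_smult[OF x(1) assms(2)]
    unfolding lower_boundaries_def eqM_def by (intro CollectI exI[of _ "\<lambda>z. monom c d * x z"]) auto
qed

lemma lower_boundaries_diff:
  assumes "f \<in> lower_boundaries p k a b" "g \<in> lower_boundaries p k a b"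
  shows "(\<lambda>z. f z - g z) \<in> lower_boundaries p k a b"
  using lower_boundaries_add[OF assms(1) lower_boundaries_smult[OF assms(2) inZp_of_int, of "-1" 0]]
  by (simp add: monom_0)

lemma lower_boundaries_sum:
  assumes "finite T" "\<And>t. t \<in> T \<Longrightarrow> f t \<in> lower_boundaries p k a b"
  shows "(\<lambda>z. \<Sum>t\<in>T. f t z) \<in> lower_boundaries p k a b"
  using assms
proof (induction T rule: finite_induct)
  case empty
  then show ?case by (simp add: lower_boundaries_0)
next
  case (insert t T)
  then show ?case by (simp add: lower_boundaries_add)
qed

lemma lower_boundaries_cong:
  assumes "f \<in> lower_boundaries p k a b" "\<And>z. f z = g z"
  shows "g \<in> lower_boundaries p k a b"
proof -
  have "f = g" using assms(2) by (rule ext)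
  then show ?thesis using assms(1) by simp
qed

lemma eqM_of_lower_boundaries:
  assumes "(\<lambda>z. f z - h z) \<in> lower_boundaries p k a b"
  obtains x where "lower_filt p k x a b" "eqM p f (\<lambda>z. h z + bd p k x z)"
proof -
  obtain x where "lower_filt p k x a b" "(\<lambda>z. f z - h z - bd p k x z) \<in> relations p"
    using assms unfolding lower_boundaries_def eqM_def by blast
  moreover have "(\<lambda>z. f z - h z - bd p k x z) = (\<lambda>z. f z - (h z + bd p k x z))"
    by (simp add: fun_eq_iff algebra_simps)
  ultimately show ?thesis using that unfolding eqM_def by simp
qed

lemma mbr_smult_lower_boundaries:
  assumes "mbr c e i j \<in> lower_boundaries p k a b" "inZp p w"
  shows "mbr (w * c) e i j \<in> lower_boundaries p k a b"
  using lower_boundaries_smult[OF assms, of 0]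
  by (simp add: mbr_def mult_monom mult.assoc[symmetric])

lemma lower_boundaries_sum_diff:
  assumes "finite S" "T \<subseteq> S" "\<And>s. s \<in> S - T \<Longrightarrow> f s \<in> lower_boundaries p k a b"
  shows "(\<lambda>z. (\<Sum>s\<in>S. f s z) - (\<Sum>s\<in>T. f s z)) \<in> lower_boundaries p k a b"
  using lower_boundaries_sum[of "S - T" f, OF _ assms(3)] assms(1,2)
  by (simp add: sum_diff finite_subset)

text \<open>The summands are those of \<open>c v^e\<close> times the relation at \<open>[i, j]\<close>.\<close>
lemma relation_lower_boundaries:
  assumes "inZp p c" "T \<subseteq> {..<p ^ 2}"
    and "\<And>t. t < p ^ 2 \<Longrightarrow> t \<notin> T \<Longrightarrow>
      mbr (c * of_nat (p ^ 2 choose (t + 1))) (e + t) i (j - t) \<in> lower_boundaries p k a b"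
  shows "(\<lambda>z. \<Sum>t\<in>T. mbr (c * of_nat (p ^ 2 choose (t + 1))) (e + t) i (j - t) z)
    \<in> lower_boundaries p k a b"
proof -
  let ?f = "\<lambda>t. mbr (c * of_nat (p ^ 2 choose (t + 1))) (e + t) i (j - t)"
  have "(\<lambda>z. monom c e * relem p i j z) = (\<lambda>z. \<Sum>t<p ^ 2. ?f t z)"
    by (simp add: fun_eq_iff relem_def acoef_def mbr_def sum_distrib_left mult_monom
        mult.assoc[symmetric])
  moreover have "(\<lambda>z. monom c e * relem p i j z) \<in> lower_boundaries p k a b"
    using relations_subset_lower_boundaries[OF relations_relem[OF assms(1)]] .
  ultimately have "(\<lambda>z. \<Sum>t<p ^ 2. ?f t z) \<in> lower_boundaries p k a b" by simp
  moreover have "(\<lambda>z. (\<Sum>t<p ^ 2. ?f t z) - (\<Sum>t\<in>T. ?f t z)) \<in> lower_boundaries p k a b"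
    using assms(2,3) by (intro lower_boundaries_sum_diff) auto
  ultimately show ?thesis
    by (rule lower_boundaries_cong[OF lower_boundaries_diff]) simp
qed

lemma bd_mbr_lower_boundaries:
  assumes "1 \<le> i" "i \<le> p ^ (k + 1)" "T \<subseteq> {..<i}"
    and "\<And>t. t < i \<Longrightarrow> t \<notin> T \<Longrightarrow>
      mbr (c * of_nat (p ^ (k + 1) choose (t + 1))) (e + t) (i - t) j \<in> lower_boundaries p k a b"
  shows "(\<lambda>z. bd p k (mbr c e i j) z
      - (\<Sum>t\<in>T. mbr (c * of_nat (p ^ (k + 1) choose (t + 1))) (e + t) (i - t) j z))
    \<in> lower_boundaries p k a b"
  unfolding bd_mbr[OF assms(1,2)] using assms(3,4) by (intro lower_boundaries_sum_diff) auto

lemma leading_bd_term_lower_boundaries: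
  assumes "1 \<le> i" "i \<le> p ^ (k + 1)" "1 \<le> j" "filt p k i j < filt p k a b"
    and "\<And>t. 0 < t \<Longrightarrow> t < i \<Longrightarrow>
      mbr (of_nat (p ^ (k + 1) choose (t + 1))) (e + t) (i - t) j \<in> lower_boundaries p k a b"
  shows "mbr (of_nat p ^ (k + 1)) e i j \<in> lower_boundaries p k a b"
proof -
  have "bd p k (mbr 1 e i j) \<in> lower_boundaries p k a b"
    using assms(1,3,4) by (intro bd_in_lower_boundaries lower_filt_mbr) auto
  moreover have "(\<lambda>z. bd p k (mbr 1 e i j) z
      - (\<Sum>t\<in>{0}. mbr (1 * of_nat (p ^ (k + 1) choose (t + 1))) (e + t) (i - t) j z))
    \<in> lower_boundaries p k a b"
    using assms(1,2,5) by (intro bd_mbr_lower_boundaries) auto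
  ultimately show ?thesis
    by (rule lower_boundaries_cong[OF lower_boundaries_diff]) (simp add: of_nat_power)
qed

section \<open>Descent along a row\<close>

lemma mixed_radix_less:
  fixes x x' d d' m :: nat
  assumes "x' \<le> x" "x' < x \<or> d' < d" "d' \<le> m"
  shows "x' * (m + 1) + d' < x * (m + 1) + d"
proof (cases "x' < x")
  case True
  then have "(x' + 1) * (m + 1) \<le> x * (m + 1)" by (intro mult_le_mono1) simp
  moreover have "(x' + 1) * (m + 1) = x' * (m + 1) + m + 1" by simp
  ultimately show ?thesis using assms(3) by linarith
next
  case False
  then show ?thesis using assms(1,2) by simp
qed

lemma row_descent_bounds:
  fixes g A a e j s t n :: nat
  assumes "1 \<le> g" "1 \<le> a" "a < A" "(A - a) * g \<le> e" "j + s \<le> a * g + g * g" "t < j + g"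
    and n: "n = 2 \<or> (n = 1 \<and> 2 * g < t) \<or> (n = 0 \<and> t = g * g + 2 * g)"
  defines "a' \<equiv> a - 1 + n"
  shows "1 \<le> a' \<and> a' \<le> A \<and> (A - a') * g \<le> e - g + t \<and> j + g - t + s \<le> a' * g + g * g \<and>
    j + g - t + (A - a') * g \<le> j + (A - a) * g \<and>
    (j + g - t + (A - a') * g < j + (A - a) * g \<or> A - a' < A - a)"
proof -
  have "1 * g \<le> (A - a) * g" using assms(3) by (intro mult_le_mono1) simp
  then have "g \<le> (A - a) * g" by simp
  from n consider (two) "n = 2" | (one) "n = 1" "2 * g < t" | (zero) "n = 0" "t = g * g + 2 * g"
    by blast
  then show ?thesis
  proof cases
    case two
    then have a': "a' = a + 1" using assms(2) by (simp add: a'_def)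
    have "A - a = (A - a') + 1" using assms(3) a' by simp
    then have "(A - a) * g = (A - a') * g + g" by (simp add: distrib_right)
    moreover have "a' * g = a * g + g" using a' by simp
    moreover have "A - a' < A - a" using assms(3) a' by simp
    ultimately show ?thesis using assms(3-6) a' \<open>g \<le> (A - a) * g\<close>
      by (intro conjI disjI2; linarith)
  next
    case one
    then have a': "a' = a" using assms(2) by (simp add: a'_def)
    have "(A - a) * g \<le> e - g + t" "j + g - t + s \<le> a * g + g * g"
      "j + g - t + (A - a) * g < j + (A - a) * g"
      using one(2) assms(4-6) by linarith+
    then show ?thesis unfolding a' using assms(2,3) by simp
  next
    case zero
    have "a \<noteq> 1"
    proof
      assume "a = 1"
      then show False using zero assms(5,6) by simp
    qed
    then have a': "a' = a - 1" "2 \<le> a" using assms(2) zero by (simp_all add: a'_def)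
    have "A - a' = (A - a) + 1" using assms(3) a' by simp
    then have "(A - a') * g = (A - a) * g + g" by (simp add: distrib_right)
    moreover have "a * g = a' * g + g"
    proof -
      have "a = a' + 1" using a' by simp
      then show ?thesis by (simp add: distrib_right)
    qed
    moreover have "1 \<le> g * g" using assms(1) by simp
    moreover have "1 \<le> a'" "a' \<le> A" using assms(3) a' by auto
    ultimately show ?thesis using zero(2) assms(4-6) by (intro conjI disjI1; linarith)
  qed
qed

lemma relation_tail_bounds:
  fixes g A m s e j t n :: nat
  assumes "1 \<le> g" "m + 2 \<le> A" "(A - (m + 2)) * g \<le> e" "j + s \<le> (m + 2) * g + g * g + 1"
    and "1 \<le> m + s" "0 < t" "t < j"
    and n: "n = 2 \<or> (n = 1 \<and> 2 * g < t) \<or> (n = 0 \<and> t = g * g + 2 * g)"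
  shows "1 \<le> m + n \<and> m + n \<le> A \<and> (A - (m + n)) * g \<le> e + t \<and> j - t + s \<le> (m + n) * g + g * g"
proof -
  have Am: "A - (m + 1) = (A - (m + 2)) + 1" "A - m = (A - (m + 2)) + 2" using assms(2) by simp_all
  from n consider (two) "n = 2" | (one) "n = 1" "2 * g < t" | (zero) "n = 0" "t = g * g + 2 * g"
    by blast
  then show ?thesis
  proof cases
    case two
    then show ?thesis using assms(2-4,6,7) by (simp add: algebra_simps)
  next
    case one
    then show ?thesis using assms(2-4,7) Am by (simp add: algebra_simps)
  next
    case zero
    have "1 \<le> m"
    proof (rule ccontr)
      assume "\<not> 1 \<le> m"
      then have "m = 0" by simp
      then show False using zero assms(4,5,7) by simp
    qed
    moreover have "1 \<le> g * g" using assms(1) by simp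
    moreover have "(A - m) * g = (A - (m + 2)) * g + 2 * g" "(m + 2) * g = m * g + 2 * g"
      using Am by (simp_all add: distrib_right)
    ultimately show ?thesis unfolding zero(1) add_0_right using zero(2) assms(2-4,7)
      by (intro conjI; linarith)
  qed
qed

context
  fixes p :: nat
  assumes prime: "prime p"
begin

private abbreviation (input) g :: nat where "g \<equiv> p - 1"

lemma g_ge_1: "1 \<le> g"
  using prime_ge_2_nat[OF prime] by simp

lemma choose_prime_square_factor_g:
  assumes "t < p ^ 2" "t \<noteq> g"
  obtains n d where "p ^ 2 choose (t + 1) = d * p ^ n"
    and "n = 2 \<or> (n = 1 \<and> 2 * g < t) \<or> (n = 0 \<and> t = g * g + 2 * g)"
proof -
  have "p ^ 2 - 1 = g * g + 2 * g"
    using prime_ge_2_nat[OF prime] by (cases p) (simp_all add: power2_eq_square algebra_simps)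
  then show ?thesis using choose_prime_square_factor[OF prime assms] that by metis
qed

lemma g_less_p_square: "g < p ^ 2"
  using le_square[of p] prime_gt_0_nat[OF prime] unfolding power2_eq_square by linarith

lemma choose_prime_square_g: "p ^ 2 choose (g + 1) = p * U1 p"
  using choose_prime_square_prime(1)[OF prime] prime_ge_2_nat[OF prime] by simp

lemma inZp_inverse_U1: "inZp p (inverse (of_nat (U1 p)))"
  using inZp_inverse_of_nat[OF prime choose_prime_square_prime(2)[OF prime]] .

lemma U1_neq_0: "U1 p \<noteq> 0"
  using choose_prime_square_prime(2)[OF prime] by (metis dvd_0_right)

text \<open>
  The summands are those of \<open>w p^m v^e\<close> times the relation at \<open>[i, j]\<close>; by the valuation of
  \<open>binom(p^2, t + 1)\<close>, those outside \<open>T\<close> are \<open>\<int>_(p)\<close>-multiples of \<open>p^(m+n) v^(e+t) [i, j - t]\<close>.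
\<close>
lemma relation_pow_lower_boundaries:
  assumes w: "inZp p w" and T: "T \<subseteq> {..<p ^ 2}" "g \<in> T"
    and tail: "\<And>t n. t < p ^ 2 \<Longrightarrow> t \<notin> T \<Longrightarrow> t < j \<Longrightarrow>
      n = 2 \<or> (n = 1 \<and> 2 * g < t) \<or> (n = 0 \<and> t = g * g + 2 * g) \<Longrightarrow>
      mbr (of_nat p ^ (m + n)) (e + t) i (j - t) \<in> lower_boundaries p k a b"
  shows "(\<lambda>z. \<Sum>t\<in>T. mbr (w * of_nat p ^ m * of_nat (p ^ 2 choose (t + 1))) (e + t) i (j - t) z)
    \<in> lower_boundaries p k a b"
proof (rule relation_lower_boundaries[OF _ T(1)])
  show "inZp p (w * of_nat p ^ m)" by (intro inZp_mult w inZp_power inZp_of_nat)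
  fix t assume t: "t < p ^ 2" "t \<notin> T"
  show "mbr (w * of_nat p ^ m * of_nat (p ^ 2 choose (t + 1))) (e + t) i (j - t) \<in> lower_boundaries p k a b"
  proof (cases "j \<le> t")
    case True
    then show ?thesis by (simp add: lower_boundaries_0)
  next
    case False
    have "t \<noteq> g" using t(2) T(2) by auto
    then obtain n d where nd: "p ^ 2 choose (t + 1) = d * p ^ n"
      and n: "n = 2 \<or> (n = 1 \<and> 2 * g < t) \<or> (n = 0 \<and> t = g * g + 2 * g)"
      using choose_prime_square_factor_g[OF t(1)] by blast
    have "mbr (of_nat p ^ (m + n)) (e + t) i (j - t) \<in> lower_boundaries p k a b"
      using tail[OF t _ n] False by simp
    then have "mbr ((w * of_nat d) * of_nat p ^ (m + n)) (e + t) i (j - t) \<in> lower_boundaries p k a b"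
      by (rule mbr_smult_lower_boundaries) (intro inZp_mult w inZp_of_nat)
    then show ?thesis unfolding nd by (simp add: power_add ac_simps)
  qed
qed

text \<open>
  The relation at \<open>[i, j + g]\<close> expresses \<open>p^a v^e [i, j]\<close> through terms that either carry a
  higher power of \<open>p\<close> or have a smaller second index; the lexicographic order on
  \<open>(j + (A - a) g, A - a)\<close> makes this descent terminate at the exponent \<open>A\<close>.
\<close>
lemma row_descent:
  assumes base: "\<And>e j. 1 \<le> j \<Longrightarrow> j + s \<le> A * g + g * g \<Longrightarrow>
      mbr (of_nat p ^ A) e i j \<in> lower_boundaries p k a0 b0"
    and "1 \<le> a" "a \<le> A" "(A - a) * g \<le> e" "j + s \<le> a * g + g * g"
  shows "mbr (of_nat p ^ a) e i j \<in> lower_boundaries p k a0 b0"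
proof -
  define mu where "mu a j = (j + (A - a) * g) * (A + 1) + (A - a)" for a j
  have "mu a j = n \<Longrightarrow> 1 \<le> a \<Longrightarrow> a \<le> A \<Longrightarrow> (A - a) * g \<le> e \<Longrightarrow> j + s \<le> a * g + g * g \<Longrightarrow>
      mbr (of_nat p ^ a) e i j \<in> lower_boundaries p k a0 b0" for n a j e
  proof (induction n arbitrary: a j e rule: less_induct)
    case (less n a j e)
    consider "j = 0" | "a = A" "j \<noteq> 0" | "a < A" using less.prems(3) by linarith
    then show ?case
    proof cases
      case 3
      then have "1 * g \<le> (A - a) * g" by (intro mult_le_mono1) simp
      then have "g \<le> e" using less.prems(4) by linarith
      define w :: rat where "w = inverse (of_nat (U1 p))"
      have "(\<lambda>z. \<Sum>t\<in>{g}. mbr (w * of_nat p ^ (a - 1) * of_nat (p ^ 2 choose (t + 1)))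
          (e - g + t) i (j + g - t) z) \<in> lower_boundaries p k a0 b0"
      proof (rule relation_pow_lower_boundaries)
        fix t n :: nat assume "t < j + g" and n: "n = 2 \<or> (n = 1 \<and> 2 * g < t) \<or> (n = 0 \<and> t = g * g + 2 * g)"
        note bounds = row_descent_bounds[OF g_ge_1 less.prems(2) \<open>a < A\<close> less.prems(4,5) this]
        have "mu (a - 1 + n) (j + g - t) < mu a j"
          unfolding mu_def using bounds by (intro mixed_radix_less) auto
        then show "mbr (of_nat p ^ (a - 1 + n)) (e - g + t) i (j + g - t) \<in> lower_boundaries p k a0 b0"
          using bounds by (intro less.IH[OF _ refl]) (simp_all add: less.prems(1))
      qed (use g_less_p_square in \<open>auto simp: w_def inZp_inverse_U1\<close>)
      moreover have "w * of_nat p ^ (a - 1) * of_nat (p ^ 2 choose (g + 1)) = of_nat p ^ a"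
        unfolding w_def choose_prime_square_g using U1_neq_0 less.prems(2)
        by (simp add: power_minus_mult[symmetric] field_simps)
      moreover have "(\<Sum>t\<in>{g}. F t) = F g" for F :: "nat \<Rightarrow> rat poly" by simp
      ultimately show ?thesis using \<open>g \<le> e\<close> by simp
    qed (use base less.prems in \<open>simp_all add: lower_boundaries_0\<close>)
  qed
  then show ?thesis using assms(2-5) by blast
qed

lemma relation_leading_terms:
  assumes row: "\<And>a e j. 1 \<le> a \<Longrightarrow> a \<le> A \<Longrightarrow> (A - a) * g \<le> e \<Longrightarrow> j + s \<le> a * g + g * g \<Longrightarrow>
      mbr (of_nat p ^ a) e i j \<in> lower_boundaries p k a0 b0"
    and w: "inZp p w"
    and bounds: "m + 2 \<le> A" "(A - (m + 2)) * g \<le> e" "j + s \<le> (m + 2) * g + g * g + 1" "1 \<le> m + s"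
  shows "(\<lambda>z. mbr (w * of_nat p ^ (m + 2)) e i j z
      + mbr (w * of_nat (U1 p) * of_nat p ^ (m + 1)) (e + g) i (j - g) z) \<in> lower_boundaries p k a0 b0"
proof -
  have "(\<lambda>z. \<Sum>t\<in>{0, g}. mbr (w * of_nat p ^ m * of_nat (p ^ 2 choose (t + 1))) (e + t) i (j - t) z)
      \<in> lower_boundaries p k a0 b0"
  proof (rule relation_pow_lower_boundaries[OF w])
    fix t n :: nat assume "t < p ^ 2" "t \<notin> {0, g}" "t < j"
      and n: "n = 2 \<or> (n = 1 \<and> 2 * g < t) \<or> (n = 0 \<and> t = g * g + 2 * g)"
    then show "mbr (of_nat p ^ (m + n)) (e + t) i (j - t) \<in> lower_boundaries p k a0 b0"
      using relation_tail_bounds[OF g_ge_1 bounds _ _ n] row by auto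
  qed (use g_less_p_square prime_gt_0_nat[OF prime] in auto)
  moreover have "0 \<noteq> g" using g_ge_1 by simp
  ultimately show ?thesis
    using choose_prime_square_prime(1)[OF prime, unfolded power2_eq_square]
    by (simp add: power_add power2_eq_square ac_simps)
qed

lemma unitZp_minus_U1_power: "unitZp p ((- of_nat (U1 p)) ^ n)"
proof -
  have "inZp p ((- of_nat (U1 p)) ^ n)"
    using inZp_power[OF inZp_of_int[of p "- int (U1 p)"]] by simp
  moreover have "inverse ((- of_nat (U1 p)) ^ n) = (- inverse (of_nat (U1 p)) :: rat) ^ n"
    by (simp add: power_inverse[symmetric])
  then have "inZp p (inverse ((- of_nat (U1 p)) ^ n))"
    using inZp_power[OF inZp_uminus[OF inZp_inverse_U1]] by simp
  ultimately show ?thesis using U1_neq_0 unfolding unitZp_def by simp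
qed

lemma p_le_power: "p \<le> p ^ (k + 1)"
  using prime_gt_0_nat[OF prime] by (intro self_le_power) auto

lemma mbr_choose_prime_power_lower_boundaries:
  assumes "mbr (of_nat p ^ (k + 1)) e i j \<in> lower_boundaries p k a b" "0 < t" "t + 1 < p"
  shows "mbr (of_nat (p ^ (k + 1) choose (t + 1))) e i j \<in> lower_boundaries p k a b"
proof -
  have "\<not> p dvd (t + 1)" using assms(3) by (auto dest: dvd_imp_le)
  then obtain d where "p ^ (k + 1) choose (t + 1) = p ^ (k + 1) * d"
    using prime_power_dvd_choose[OF prime] by (metis dvdE zero_less_Suc Suc_eq_plus1)
  then show ?thesis
    using mbr_smult_lower_boundaries[OF assms(1) inZp_of_nat, of d] by (simp add: mult.commute)
qed

section \<open>The boundary of \<open>[p, N]\<close>\<close>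

context
  fixes k :: nat
  assumes k_ge_2: "2 \<le> k"
begin

private abbreviation (input) N :: nat where "N \<equiv> g * g + k * g + 1"

private abbreviation (input) L :: "elt set" where "L \<equiv> lower_boundaries p k p N"

lemma filt_less_low_row:
  assumes "i \<le> g" "j \<le> N + g"
  shows "filt p k i j < filt p k p N"
proof -
  define X where "X = p ^ k"
  define Q where "Q = p ^ (k + 1) + 1"
  define P where "P = X + 1"
  have "p \<le> X" unfolding X_def using k_ge_2 prime_gt_0_nat[OF prime] by (intro self_le_power) auto
  have p: "p = g + 1" using prime_gt_0_nat[OF prime] by simp
  have "p ^ (k + 1) = (g + 1) * X" unfolding X_def using arg_cong[OF p, of "\<lambda>x. x * p ^ k"] by simp
  then have Q: "Q = g * X + X + 1" unfolding Q_def by simp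
  have "i * Q \<le> g * Q" "j * P \<le> (N + g) * P"
    using mult_le_mono1[OF assms(1)] mult_le_mono1[OF assms(2)] by blast+
  moreover have "p * Q = g * Q + Q" using arg_cong[OF p, of "\<lambda>x. x * Q"] by simp
  moreover have "(N + g) * P = N * P + g * X + g"
    unfolding P_def by (simp only: distrib_left distrib_right mult_1_right add_ac)
  moreover have "filt p k i j = i * Q + j * P" "filt p k p N = p * Q + N * P"
    unfolding filt_def Q_def P_def X_def by simp_all
  ultimately show ?thesis using \<open>p \<le> X\<close> Q p by linarith
qed

lemma filt_less_top_row:
  assumes "j < N"
  shows "filt p k p j < filt p k p N"
proof -
  have "j * (p ^ k + 1) < N * (p ^ k + 1)" using assms by (intro mult_less_mono1) simp_all
  then show ?thesis unfolding filt_def by linarith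
qed

lemma low_row:
  "1 \<le> i \<Longrightarrow> i \<le> g \<Longrightarrow> 1 \<le> j \<Longrightarrow> j \<le> N + g \<Longrightarrow> mbr (of_nat p ^ (k + 1)) e i j \<in> L"
proof (induction i arbitrary: e rule: less_induct)
  case (less i)
  show ?case
  proof (rule leading_bd_term_lower_boundaries)
    show "i \<le> p ^ (k + 1)" using less.prems(2) p_le_power[of k] by linarith
    show "filt p k i j < filt p k p N" using less.prems by (intro filt_less_low_row)
    fix t assume "0 < t" "t < i"
    then have "mbr (of_nat p ^ (k + 1)) (e + t) (i - t) j \<in> L"
      using less.prems by (intro less.IH) auto
    then show "mbr (of_nat (p ^ (k + 1) choose (t + 1))) (e + t) (i - t) j \<in> L"
      using \<open>0 < t\<close> \<open>t < i\<close> less.prems(2) by (intro mbr_choose_prime_power_lower_boundaries) auto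
  qed (use less.prems in auto)
qed

lemma row_one:
  assumes "1 \<le> a" "a \<le> k + 1" "(k + 1 - a) * g \<le> e" "j \<le> a * g + g * g"
  shows "mbr (of_nat p ^ a) e 1 j \<in> L"
proof (rule row_descent[OF _ assms(1,2,3), where s = 0])
  fix e j assume "1 \<le> j" "j + 0 \<le> (k + 1) * g + g * g"
  moreover have "(k + 1) * g = k * g + g" by simp
  ultimately show "mbr (of_nat p ^ (k + 1)) e 1 j \<in> L"
    using g_ge_1 by (intro low_row) linarith+
qed (use assms(4) in simp)

lemma top_row_base:
  assumes "1 \<le> j" "j + g \<le> (k + 1) * g + g * g"
  shows "mbr (of_nat p ^ (k + 1)) e p j \<in> L"
proof (rule leading_bd_term_lower_boundaries)
  have "(k + 1) * g = k * g + g" by simp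
  then have j: "j \<le> k * g + g * g" using assms(2) by linarith
  show "1 \<le> p" "p \<le> p ^ (k + 1)" using prime_gt_0_nat[OF prime] p_le_power[of k] by auto
  show "filt p k p j < filt p k p N" using j by (intro filt_less_top_row) simp
  fix t assume t: "0 < t" "t < p"
  show "mbr (of_nat (p ^ (k + 1) choose (t + 1))) (e + t) (p - t) j \<in> L"
  proof (cases "t = g")
    case True
    have "mbr (of_nat p ^ k) (e + g) 1 j \<in> L"
      using k_ge_2 j by (intro row_one) simp_all
    then have "mbr (of_nat (Y1 p k) * of_nat p ^ k) (e + g) 1 j \<in> L"
      by (rule mbr_smult_lower_boundaries) simp
    moreover have "t + 1 = p" "p - t = 1" using True t by auto
    ultimately show ?thesis
      using True choose_prime_power_prime[OF prime, of k] by (simp add: mult.commute)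
  next
    case False
    have "mbr (of_nat p ^ (k + 1)) (e + t) (p - t) j \<in> L"
      using t j assms(1) by (intro low_row) simp_all
    then show ?thesis using t False by (intro mbr_choose_prime_power_lower_boundaries) auto
  qed
qed (use assms(1) in simp)

lemma top_row:
  assumes "1 \<le> a" "a \<le> k + 1" "(k + 1 - a) * g \<le> e" "j + g \<le> a * g + g * g"
  shows "mbr (of_nat p ^ a) e p j \<in> L"
  using row_descent[OF _ assms(1-4)] top_row_base by blast

lemma top_term_shift:
  "i \<le> k \<Longrightarrow> (\<lambda>z. mbr (of_nat p ^ (k + 1)) 0 p N z
      - mbr ((- of_nat (U1 p)) ^ i * of_nat p ^ (k + 1 - i)) (i * g) p (N - i * g) z) \<in> L"
proof (induction i)
  case 0
  show ?case by (rule lower_boundaries_cong[OF lower_boundaries_0]) simp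
next
  case (Suc i)
  define m where "m = k - 1 - i"
  have m: "m + 2 = k + 1 - i" "m + 1 = k + 1 - Suc i" using Suc.prems by (simp_all add: m_def)
  have "i * g \<le> k * g" using Suc.prems by simp
  moreover have "(m + 2) * g = (k + 1) * g - i * g" unfolding m by (rule diff_mult_distrib)
  moreover have "(k + 1) * g = k * g + g" by simp
  ultimately have bound: "N - i * g + g \<le> (m + 2) * g + g * g + 1" by linarith
  have step: "(\<lambda>z. mbr ((- of_nat (U1 p)) ^ i * of_nat p ^ (m + 2)) (i * g) p (N - i * g) z
      + mbr ((- of_nat (U1 p)) ^ i * of_nat (U1 p) * of_nat p ^ (m + 1)) (i * g + g) p (N - i * g - g) z)
    \<in> L"
  proof (rule relation_leading_terms[where A = "k + 1" and s = g, OF _ _ _ _ bound])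
    show "mbr (of_nat p ^ a) e p j \<in> L"
      if "1 \<le> a" "a \<le> k + 1" "(k + 1 - a) * g \<le> e" "j + g \<le> a * g + g * g" for a e j
      using that by (rule top_row)
    show "inZp p ((- of_nat (U1 p)) ^ i)"
      using inZp_power[OF inZp_of_int[of p "- int (U1 p)"]] by simp
    show "m + 2 \<le> k + 1" "1 \<le> m + g" using m g_ge_1 by simp_all
    have "k + 1 - (m + 2) = i" using Suc.prems by (simp add: m_def)
    then show "(k + 1 - (m + 2)) * g \<le> i * g" by simp
  qed
  have "N - i * g - g = N - Suc i * g" "i * g + g = Suc i * g" by (simp_all add: add.commute)
  with step have "(\<lambda>z. mbr ((- of_nat (U1 p)) ^ i * of_nat p ^ (k + 1 - i)) (i * g) p (N - i * g) z
      - mbr ((- of_nat (U1 p)) ^ Suc i * of_nat p ^ (k + 1 - Suc i)) (Suc i * g) p (N - Suc i * g) z)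
    \<in> L"
    unfolding m by (simp add: mbr_def minus_monom[symmetric] algebra_simps)
  with Suc have "(\<lambda>z. (mbr (of_nat p ^ (k + 1)) 0 p N z
        - mbr ((- of_nat (U1 p)) ^ i * of_nat p ^ (k + 1 - i)) (i * g) p (N - i * g) z)
      + (mbr ((- of_nat (U1 p)) ^ i * of_nat p ^ (k + 1 - i)) (i * g) p (N - i * g) z
        - mbr ((- of_nat (U1 p)) ^ Suc i * of_nat p ^ (k + 1 - Suc i)) (Suc i * g) p (N - Suc i * g) z))
    \<in> L"
    by (intro lower_boundaries_add) simp_all
  then show ?case by (rule lower_boundaries_cong) simp
qed

lemma bd_top_generator:
  "(\<lambda>z. bd p k (mbr 1 0 p N) z
      - (mbr (of_nat p ^ (k + 1)) 0 p N z + mbr (of_nat (p ^ (k + 1) choose p)) g 1 N z)) \<in> L"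
proof -
  have "0 < p" "0 \<noteq> g" "g < p" using prime_gt_0_nat[OF prime] g_ge_1 by auto
  have "(\<lambda>z. bd p k (mbr 1 0 p N) z
      - (\<Sum>t\<in>{0, g}. mbr (1 * of_nat (p ^ (k + 1) choose (t + 1))) (0 + t) (p - t) N z)) \<in> L"
  proof (rule bd_mbr_lower_boundaries)
    fix t assume t: "t < p" "t \<notin> {0, g}"
    then have "mbr (of_nat p ^ (k + 1)) t (p - t) N \<in> L" using g_ge_1 by (intro low_row) auto
    then have "mbr (of_nat (p ^ (k + 1) choose (t + 1))) t (p - t) N \<in> L"
      using t by (intro mbr_choose_prime_power_lower_boundaries) auto
    then show "mbr (1 * of_nat (p ^ (k + 1) choose (t + 1))) (0 + t) (p - t) N \<in> L" by simp
  qed (use \<open>0 < p\<close> p_le_power[of k] \<open>g < p\<close> in auto)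
  then show ?thesis using \<open>0 \<noteq> g\<close> \<open>0 < p\<close> by (simp add: of_nat_power)
qed

lemma correction_relation:
  "(\<lambda>z. mbr (of_nat (Y1 p k) / of_nat (U1 p) * of_nat p ^ (k + 1)) 0 1 (N + g) z
      + mbr (of_nat (p ^ (k + 1) choose p)) g 1 N z) \<in> L"
proof -
  define c :: rat where "c = of_nat (Y1 p k) / of_nat (U1 p)"
  have "inZp p c"
    unfolding c_def divide_inverse by (intro inZp_mult inZp_of_nat inZp_inverse_U1)
  have "k - 1 + 2 = k + 1" using k_ge_2 by simp
  then have "(k - 1 + 2) * g = k * g + g" by simp
  then have bound: "N + g + 0 \<le> (k - 1 + 2) * g + g * g + 1" by simp
  have "(\<lambda>z. mbr (c * of_nat p ^ (k - 1 + 2)) 0 1 (N + g) z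
      + mbr (c * of_nat (U1 p) * of_nat p ^ (k - 1 + 1)) (0 + g) 1 (N + g - g) z) \<in> L"
  proof (rule relation_leading_terms[where A = "k + 1" and s = 0, OF _ \<open>inZp p c\<close> _ _ bound])
    show "mbr (of_nat p ^ a) e 1 j \<in> L"
      if "1 \<le> a" "a \<le> k + 1" "(k + 1 - a) * g \<le> e" "j + 0 \<le> a * g + g * g" for a e j
      using that by (intro row_one) simp_all
  qed (use k_ge_2 in simp_all)
  moreover have "c * of_nat (U1 p) * of_nat p ^ k = of_nat (p ^ (k + 1) choose p)"
    unfolding c_def choose_prime_power_prime[OF prime] using U1_neq_0 by simp
  ultimately show ?thesis using k_ge_2 by (simp add: c_def)
qed

lemma boundary_correction:
  "(\<lambda>z. bd p k (\<lambda>z. br p N z + [:of_nat (Y1 p k) / of_nat (U1 p):] * br 1 (N + g) z) z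
      - mbr ((- of_nat (U1 p)) ^ k * of_nat p) (k * g) p (g * g + 1) z) \<in> L"
proof -
  define c :: rat where "c = of_nat (Y1 p k) / of_nat (U1 p)"
  have "(\<lambda>z. br p N z + [:c:] * br 1 (N + g) z) = (\<lambda>z. mbr 1 0 p N z + mbr c 0 1 (N + g) z)"
    by (simp add: mbr_def monom_0)
  moreover have "bd p k (mbr c 0 1 (N + g)) = mbr (c * of_nat p ^ (k + 1)) 0 1 (N + g)"
    using bd_mbr[of 1 p k c 0 "N + g"] p_le_power[of k] prime_gt_0_nat[OF prime] by (simp add: of_nat_power)
  ultimately have bd_eq: "bd p k (\<lambda>z. br p N z + [:c:] * br 1 (N + g) z)
      = (\<lambda>z. bd p k (mbr 1 0 p N) z + mbr (c * of_nat p ^ (k + 1)) 0 1 (N + g) z)"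
    by (simp add: bd_add)
  have shift: "(\<lambda>z. mbr (of_nat p ^ (k + 1)) 0 p N z
      - mbr ((- of_nat (U1 p)) ^ k * of_nat p) (k * g) p (g * g + 1) z) \<in> L"
    using top_term_shift[of k] by simp
  show ?thesis
    unfolding c_def[symmetric] bd_eq
    by (rule lower_boundaries_cong[OF lower_boundaries_add[OF lower_boundaries_add[OF
          bd_top_generator correction_relation[folded c_def]] shift]]) simp
qed

end

end

theorem corollary5p3:
  fixes p k :: nat
  assumes "prime p" and "2 \<le> k"
  defines "g1 \<equiv> p - 1"
  defines "u1 \<equiv> (of_nat ((p ^ 2) choose p) / of_nat p :: rat)"
  defines "y1 \<equiv> (of_nat ((p ^ (k + 1)) choose p) / of_nat (p ^ k) :: rat)"
  shows "\<exists>u x. unitZp p u \<and> lower_filt p k x p (g1 ^ 2 + k * g1 + 1) \<and>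
    eqM p
      (bd p k (\<lambda>z. br p (g1 ^ 2 + k * g1 + 1) z
                 + [:y1 / u1:] * br 1 (g1 ^ 2 + (k + 1) * g1 + 1) z))
      (\<lambda>z. [:u:] * of_nat p * monom 1 (k * g1) * br p (g1 ^ 2 + 1) z + bd p k x z)"
proof -
  define u where "u = (- of_nat (U1 p) :: rat) ^ k"
  have coeff: "y1 / u1 = of_nat (Y1 p k) / of_nat (U1 p)"
    unfolding y1_def u1_def choose_prime_power_prime[OF assms(1)] choose_prime_square_prime(1)[OF assms(1)]
    using prime_gt_0_nat[OF assms(1)] by simp
  have index: "(p - 1) ^ 2 + k * (p - 1) + 1 = (p - 1) * (p - 1) + k * (p - 1) + 1"
    "(p - 1) ^ 2 + 1 = (p - 1) * (p - 1) + 1"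
    "(p - 1) ^ 2 + (k + 1) * (p - 1) + 1 = (p - 1) * (p - 1) + k * (p - 1) + 1 + (p - 1)"
    by (simp_all add: power2_eq_square)
  have leading: "monom (u * of_nat p) (k * (p - 1)) = [:u:] * of_nat p * monom 1 (k * (p - 1))"
    by (simp add: monom_0[symmetric] of_nat_monom mult_monom)
  have unit: "unitZp p u" unfolding u_def by (rule unitZp_minus_U1_power[OF assms(1)])
  obtain x where x: "lower_filt p k x p ((p - 1) * (p - 1) + k * (p - 1) + 1)"
    "eqM p (bd p k (\<lambda>z. br p ((p - 1) * (p - 1) + k * (p - 1) + 1) z
        + [:of_nat (Y1 p k) / of_nat (U1 p):] * br 1 ((p - 1) * (p - 1) + k * (p - 1) + 1 + (p - 1)) z))
      (\<lambda>z. [:u:] * of_nat p * monom 1 (k * (p - 1)) * br p ((p - 1) * (p - 1) + 1) z + bd p k x z)"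
    using boundary_correction[OF assms(1,2)] unfolding u_def[symmetric] mbr_def leading
    by (rule eqM_of_lower_boundaries)
  show ?thesis
    unfolding g1_def index coeff by (intro exI[of _ u] exI[of _ x] conjI unit x)
qed

end
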